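(* Let $T$ be a triangle which has no right angle and is not of type $(120^\circ,30^\circ,30^\circ)$. Then the 3-graph $K_4^{3-}$ with vertex set $[4]$ and edges $123,124,134$ is forbidden for $T$.
   Context: A 3-graph is a 3-uniform hypergraph; $G$ is $F$-free if it has no (not necessarily induced) subhypergraph isomorphic to $F$. A triangle is of type $(\alpha,\beta,\gamma)$ if $\alpha\ge\beta\ge\gamma$ are its interior angles in degrees. For a triangle $T$ with side lengths $a,b,c$ and $\varepsilon>0$, with $\varepsilon'=\varepsilon\min\{a,b,c\}$, a triangle $A'B'C'$ is $\varepsilon$-congruent to $T$ if there are $A,B,C\in\mathbb{R}^2$ with $ABC$ congruent to $T$ and $A',B',C'$ within distance $\varepsilon'$ of $A,B,C$ respectively. For finite $P\subseteq\mathbb{R}^2$, $\mathcal{H}(T,P,\varepsilon)$ is the 3-graph on $P$ whose edges are triples forming triangles $\varepsilon$-congruent to $T$. A 3-graph $H$ is forbidden for $T$ if there exists $\varepsilon>0$ such that for every $P\subseteq\mathbb{R}^2$ with $|P|=|V(H)|$, $\mathcal{H}(T,P,\varepsilon)$ is $H$-free. *)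

theory Defs
  imports "HOL-Analysis.Analysis"
begin

type_synonym pt = "real ^ 2"

definition ang :: "pt \<Rightarrow> pt \<Rightarrow> pt \<Rightarrow> real" where
  "ang p q r = arccos (((q - p) \<bullet> (r - p)) / (norm (q - p) * norm (r - p)))"

definition is_triangle :: "pt \<Rightarrow> pt \<Rightarrow> pt \<Rightarrow> bool" where
  "is_triangle t1 t2 t3 \<longleftrightarrow> \<not> collinear {t1, t2, t3}"

definition angles :: "pt \<Rightarrow> pt \<Rightarrow> pt \<Rightarrow> real list" where
  "angles t1 t2 t3 = [ang t1 t2 t3, ang t2 t1 t3, ang t3 t1 t2]"

definition has_right_angle :: "pt \<Rightarrow> pt \<Rightarrow> pt \<Rightarrow> bool" where
  "has_right_angle t1 t2 t3 \<longleftrightarrow> pi / 2 \<in> set (angles t1 t2 t3)"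

definition type_120_30_30 :: "pt \<Rightarrow> pt \<Rightarrow> pt \<Rightarrow> bool" where
  "type_120_30_30 t1 t2 t3 \<longleftrightarrow> mset (angles t1 t2 t3) = {# 2 * pi / 3, pi / 6, pi / 6 #}"

definition eps_congruent_ord :: "pt \<Rightarrow> pt \<Rightarrow> pt \<Rightarrow> real \<Rightarrow> pt \<Rightarrow> pt \<Rightarrow> pt \<Rightarrow> bool" where
  "eps_congruent_ord t1 t2 t3 \<epsilon> a' b' c' \<longleftrightarrow>
     (let \<epsilon>' = \<epsilon> * Min {dist t1 t2, dist t2 t3, dist t1 t3} in
      \<exists>a b c. dist a b = dist t1 t2 \<and> dist b c = dist t2 t3 \<and> dist a c = dist t1 t3 \<and>
              dist a' a \<le> \<epsilon>' \<and> dist b' b \<le> \<epsilon>' \<and> dist c' c \<le> \<epsilon>')"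

definition tri_edges :: "pt \<Rightarrow> pt \<Rightarrow> pt \<Rightarrow> pt set \<Rightarrow> real \<Rightarrow> pt set set" where
  "tri_edges t1 t2 t3 P \<epsilon> =
     {e. e \<subseteq> P \<and> card e = 3 \<and>
         (\<exists>a' b' c'. e = {a', b', c'} \<and> eps_congruent_ord t1 t2 t3 \<epsilon> a' b' c')}"

definition contains_copy :: "'a set \<Rightarrow> 'a set set \<Rightarrow> 'b set \<Rightarrow> 'b set set \<Rightarrow> bool" where
  "contains_copy V E VF EF \<longleftrightarrow>
     (\<exists>f. inj_on f VF \<and> f ` VF \<subseteq> V \<and> (\<forall>e\<in>EF. f ` e \<in> E))"

definition forbidden :: "'b set \<Rightarrow> 'b set set \<Rightarrow> pt \<Rightarrow> pt \<Rightarrow> pt \<Rightarrow> bool" where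
  "forbidden VF EF t1 t2 t3 \<longleftrightarrow>
     (\<exists>\<epsilon>>0. \<forall>P::pt set. finite P \<and> card P = card VF \<longrightarrow>
        \<not> contains_copy P (tri_edges t1 t2 t3 P \<epsilon>) VF EF)"

definition K43minus_V :: "nat set" where "K43minus_V = {1, 2, 3, 4}"
definition K43minus_E :: "nat set set" where
  "K43minus_E = {{1, 2, 3}, {1, 2, 4}, {1, 3, 4}}"

end

theory Submission
  imports Defs
begin

(* Suppose x, y1, y2, y3 are the images of 1, 2, 3, 4 and the three triangles x yi yj are
   eps-congruent to T, whose sides are a, b, c. The Gram determinant of the vectors yi - x is a
   polynomial in the six squared distances |x yi|^2, |yi yj|^2, and it vanishes because the
   vectors lie in the plane. Each triangle x yi yj has its sides close to a permutation of
   (a, b, c); once eps is small compared with the gaps between a, b and c, the three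
   permutations agree on the shared sides x yi. So the six distances lie close to one of finitely
   many exact configurations. A case analysis shows that the Gram determinant is nonzero at every
   exact configuration: it factors through a^2 + b^2 - c^2 and its permutations (no right angle)
   or through c^2 - 3 a^2 when a = b (not of type (120,30,30)). By continuity it is nonzero near
   these configurations, which is a contradiction. *)

lemma abs_dist_diff_dist_le: "\<bar>dist a b - dist c d\<bar> \<le> dist a c + dist b d"
  using dist_triangle2 [of a b c] dist_triangle2 [of b c d] dist_triangle3 [of c d a] dist_triangle [of a d b]
  by arith

lemma dist_Pair_le: "dist (a, b) (c, d) \<le> dist a c + dist b d"
proof -
  have "dist (a, b) (c, d) = sqrt ((dist a c)^2 + (dist b d)^2)" by (rule dist_Pair_Pair)
  also have "\<dots> \<le> dist a c + dist b d"
    using sqrt_sum_squares_le_sum_abs[of "dist a c" "dist b d"] by simp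
  finally show ?thesis .
qed

lemma finite_set_separated:
  fixes V :: "'a::real_normed_vector set"
  assumes "finite V"
  shows "\<exists>g>0. \<forall>v\<in>V. \<forall>w\<in>V. v \<noteq> w \<longrightarrow> g \<le> dist v w"
proof -
  obtain g where "g > 0" "\<forall>u\<in>(\<lambda>(v, w). v - w) ` (V \<times> V). u \<noteq> 0 \<longrightarrow> g \<le> dist 0 u"
    using finite_set_avoid[of "(\<lambda>(v, w). v - w) ` (V \<times> V)" 0] assms by auto
  then show ?thesis by (fastforce simp: dist_norm)
qed

(* The Gram determinant det (<yi - x, yj - x>) of three vectors, written in terms of
   pi = |yi - x|^2 and qij = |yi - yj|^2 through <yi - x, yj - x> = (pi + pj - qij) / 2. *)
definition gram_det :: "real \<Rightarrow> real \<Rightarrow> real \<Rightarrow> real \<Rightarrow> real \<Rightarrow> real \<Rightarrow> real" where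
  "gram_det p1 p2 p3 q12 q13 q23 =
     p1 * p2 * p3 + 2 * ((p1 + p2 - q12) / 2) * ((p1 + p3 - q13) / 2) * ((p2 + p3 - q23) / 2)
     - p1 * ((p2 + p3 - q23) / 2)^2 - p2 * ((p1 + p3 - q13) / 2)^2 - p3 * ((p1 + p2 - q12) / 2)^2"

lemma dist_vec2_sq: "(dist (x :: real^2) y)^2 = (x$1 - y$1)^2 + (x$2 - y$2)^2"
proof -
  have "(dist x y)^2 = (x - y) \<bullet> (x - y)" by (simp add: dist_norm power2_norm_eq_inner)
  then show ?thesis by (simp add: inner_vec_def sum_2 power2_eq_square)
qed

lemma gram_det_plane:
  fixes x y1 y2 y3 :: "real^2"
  shows "gram_det ((dist x y1)^2) ((dist x y2)^2) ((dist x y3)^2)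
           ((dist y1 y2)^2) ((dist y1 y3)^2) ((dist y2 y3)^2) = 0"
  unfolding dist_vec2_sq gram_det_def by algebra

lemma gram_det_scalene: "gram_det p1 p2 p3 p3 p2 p1 = (p1 + p2 - p3) * (p1 + p3 - p2) * (p2 + p3 - p1) / 2"
  and gram_det_three_equal_legs: "gram_det v v v w w w = w^2 * (3 * v - w) / 4"
  and gram_det_two_equal_legs:
    "gram_det v v w w v v = w^2 * (v + v - w) / 2"
    "gram_det v w v v w v = w^2 * (v + v - w) / 2"
    "gram_det w v v v v w = w^2 * (v + v - w) / 2"
  by (simp_all add: gram_det_def field_simps power2_eq_square)

definition perm3 :: "'a \<Rightarrow> 'a \<Rightarrow> 'a \<Rightarrow> 'a \<Rightarrow> 'a \<Rightarrow> 'a \<Rightarrow> bool" where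
  "perm3 a b c x y z \<longleftrightarrow> (x, y, z) \<in> {(a, b, c), (a, c, b), (b, a, c), (b, c, a), (c, a, b), (c, b, a)}"

lemma perm3_mem: "perm3 a b c x y z \<Longrightarrow> x \<in> {a, b, c} \<and> y \<in> {a, b, c} \<and> z \<in> {a, b, c}"
  unfolding perm3_def by auto

lemma perm3_swap12: "perm3 a b c x y z \<Longrightarrow> perm3 a b c y x z"
  and perm3_swap23: "perm3 a b c x y z \<Longrightarrow> perm3 a b c x z y"
  unfolding perm3_def by auto

lemma perm3_of_insert_eq:
  assumes "distinct [x, y, z]" "{x', y', z'} = {x, y, z}"
  shows "perm3 x y z x' y' z'"
proof -
  have "card (set [x', y', z']) = length [x', y', z']"
    using assms distinct_card[OF assms(1)] by simp
  then have "distinct [x', y', z']" by (rule card_distinct)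
  moreover have "x' \<in> {x, y, z}" "y' \<in> {x, y, z}" "z' \<in> {x, y, z}"
    using assms(2) by blast+
  ultimately show ?thesis unfolding perm3_def by (simp, elim disjE, simp_all)
qed

(* By the law of cosines: the side lengths of a triangle with no right angle that is not of
   type (120,30,30). *)
definition admissible_sides :: "real \<Rightarrow> real \<Rightarrow> real \<Rightarrow> bool" where
  "admissible_sides a b c \<longleftrightarrow> 0 < a \<and> 0 < b \<and> 0 < c \<and>
     a^2 + b^2 \<noteq> c^2 \<and> a^2 + c^2 \<noteq> b^2 \<and> b^2 + c^2 \<noteq> a^2 \<and>
     \<not> (a = b \<and> c^2 = 3 * a^2) \<and> \<not> (a = c \<and> b^2 = 3 * a^2) \<and> \<not> (b = c \<and> a^2 = 3 * b^2)"

lemma admissible_sides_perm3: "admissible_sides a b c \<Longrightarrow> perm3 a b c x y z \<Longrightarrow> admissible_sides x y z"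
  unfolding perm3_def admissible_sides_def by (auto simp: add.commute)

lemma gram_det_perm3_nonzero:
  assumes adm: "admissible_sides a b c"
    and e12: "perm3 a b c p1 p2 q12" and e13: "perm3 a b c p1 p3 q13" and e23: "perm3 a b c p2 p3 q23"
  shows "gram_det (p1^2) (p2^2) (p3^2) (q12^2) (q13^2) (q23^2) \<noteq> 0"
proof -
  consider "p1 = p2" "p1 = p3" | "p1 = p2" "p1 \<noteq> p3" | "p1 \<noteq> p2" "p1 = p3"
    | "p1 \<noteq> p2" "p1 \<noteq> p3" "p2 = p3" | "p1 \<noteq> p2" "p1 \<noteq> p3" "p2 \<noteq> p3"
    by blast
  then show ?thesis
  proof cases
    case 1
    with e12 e13 e23 have "q13 = q12" "q23 = q12" unfolding perm3_def by auto
    moreover have "admissible_sides p1 p1 q12" using admissible_sides_perm3[OF adm e12] 1 by simp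
    ultimately show ?thesis using 1 by (simp add: gram_det_three_equal_legs admissible_sides_def)
  next
    case 2
    with e12 e13 e23 have "p3 = q12" "q13 = p1" "q23 = p1" unfolding perm3_def by auto
    moreover have "admissible_sides p1 p1 q12" using admissible_sides_perm3[OF adm e12] 2 by simp
    ultimately show ?thesis using 2 by (simp add: gram_det_two_equal_legs admissible_sides_def)
  next
    case 3
    with e12 e13 e23 have "p2 = q13" "q12 = p1" "q23 = p1" unfolding perm3_def by auto
    moreover have "admissible_sides p1 p1 q13" using admissible_sides_perm3[OF adm e13] 3 by simp
    ultimately show ?thesis using 3 by (simp add: gram_det_two_equal_legs admissible_sides_def)
  next
    case 4
    with e12 e13 e23 have "p1 = q23" "q12 = p2" "q13 = p2" unfolding perm3_def by auto
    moreover have "admissible_sides p2 p2 q23" using admissible_sides_perm3[OF adm e23] 4 by simp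
    ultimately show ?thesis using 4 by (simp add: gram_det_two_equal_legs admissible_sides_def)
  next
    case 5
    with e12 e13 e23 have "q12 = p3" "q13 = p2" "q23 = p1" unfolding perm3_def by auto
    moreover have "admissible_sides p1 p2 p3" using admissible_sides_perm3[OF adm e12] calculation by simp
    ultimately show ?thesis by (simp add: gram_det_scalene admissible_sides_def)
  qed
qed

lemma ang_law_of_cosines:
  "ang p q r = arccos (((dist p q)^2 + (dist p r)^2 - (dist q r)^2) / (2 * dist p q * dist p r))"
proof -
  have "(q - p) \<bullet> (r - p) = ((norm (q - p))^2 + (norm (r - p))^2 - (norm ((q - p) - (r - p)))^2) / 2"
    by (rule dot_norm_neg)
  then have inner: "(q - p) \<bullet> (r - p) = ((dist p q)^2 + (dist p r)^2 - (dist q r)^2) / 2"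
    by (simp add: dist_norm norm_minus_commute)
  have "norm (q - p) = dist p q" "norm (r - p) = dist p r"
    by (simp_all add: dist_norm norm_minus_commute)
  then show ?thesis
    unfolding ang_def inner by (simp add: divide_divide_eq_left mult.assoc)
qed

lemma angles_law_of_cosines:
  "angles t1 t2 t3 =
     [arccos (((dist t1 t2)^2 + (dist t1 t3)^2 - (dist t2 t3)^2) / (2 * dist t1 t2 * dist t1 t3)),
      arccos (((dist t1 t2)^2 + (dist t2 t3)^2 - (dist t1 t3)^2) / (2 * dist t1 t2 * dist t2 t3)),
      arccos (((dist t1 t3)^2 + (dist t2 t3)^2 - (dist t1 t2)^2) / (2 * dist t1 t3 * dist t2 t3))]"
  unfolding angles_def by (simp add: ang_law_of_cosines dist_commute)

lemma arccos_angles_120_30_30: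
  fixes x y :: real
  assumes "0 < x" "0 < y" "y^2 = 3 * x^2"
  shows "arccos ((x^2 + y^2 - x^2) / (2 * x * y)) = pi / 6"
    and "arccos ((y^2 + x^2 - x^2) / (2 * y * x)) = pi / 6"
    and "arccos ((x^2 + x^2 - y^2) / (2 * x * x)) = 2 * pi / 3"
proof -
  have "y = sqrt 3 * x"
    using assms by (metis real_sqrt_abs real_sqrt_mult abs_of_pos)
  then have "(x^2 + y^2 - x^2) / (2 * x * y) = cos (pi / 6)" "(y^2 + x^2 - x^2) / (2 * y * x) = cos (pi / 6)"
    "(x^2 + x^2 - y^2) / (2 * x * x) = cos (2 * pi / 3)"
    using \<open>0 < x\<close> by (simp_all add: cos_30 cos_120 cos_120' field_simps power2_eq_square power_mult_distrib)
  then show "arccos ((x^2 + y^2 - x^2) / (2 * x * y)) = pi / 6"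
    "arccos ((y^2 + x^2 - x^2) / (2 * y * x)) = pi / 6"
    "arccos ((x^2 + x^2 - y^2) / (2 * x * x)) = 2 * pi / 3"
    by (simp_all add: arccos_cos)
qed

lemma triangle_admissible_sides:
  fixes t1 t2 t3 :: pt
  assumes "is_triangle t1 t2 t3" "\<not> has_right_angle t1 t2 t3" "\<not> type_120_30_30 t1 t2 t3"
  shows "admissible_sides (dist t1 t2) (dist t2 t3) (dist t1 t3)"
proof -
  define a b c where "a = dist t1 t2" and "b = dist t2 t3" and "c = dist t1 t3"
  have pos: "0 < a" "0 < b" "0 < c"
    using assms(1) unfolding a_def b_def c_def is_triangle_def by (auto simp: insert_commute)
  have angles: "angles t1 t2 t3 = [arccos ((a^2 + c^2 - b^2) / (2 * a * c)),
      arccos ((a^2 + b^2 - c^2) / (2 * a * b)), arccos ((c^2 + b^2 - a^2) / (2 * c * b))]"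
    unfolding angles_law_of_cosines a_def b_def c_def by (simp add: add.commute mult.commute)
  have no_120: "mset (angles t1 t2 t3) \<noteq> {# 2 * pi / 3, pi / 6, pi / 6 #}"
    using assms(3) unfolding type_120_30_30_def .
  have "\<not> (a = b \<and> c^2 = 3 * a^2)"
  proof
    assume "a = b \<and> c^2 = 3 * a^2"
    then have "angles t1 t2 t3 = [pi / 6, 2 * pi / 3, pi / 6]"
      unfolding angles using arccos_angles_120_30_30[OF pos(1) pos(3)] by auto
    then show False using no_120 by (simp add: add_mset_commute)
  qed
  moreover have "\<not> (a = c \<and> b^2 = 3 * a^2)"
  proof
    assume "a = c \<and> b^2 = 3 * a^2"
    then have "angles t1 t2 t3 = [2 * pi / 3, pi / 6, pi / 6]"
      unfolding angles using arccos_angles_120_30_30[OF pos(1) pos(2)] by auto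
    then show False using no_120 by (simp add: add_mset_commute)
  qed
  moreover have "\<not> (b = c \<and> a^2 = 3 * b^2)"
  proof
    assume "b = c \<and> a^2 = 3 * b^2"
    then have "angles t1 t2 t3 = [pi / 6, pi / 6, 2 * pi / 3]"
      unfolding angles using arccos_angles_120_30_30[OF pos(2) pos(1)] by auto
    then show False using no_120 by (simp add: add_mset_commute)
  qed
  moreover have "pi / 2 \<notin> set (angles t1 t2 t3)"
    using assms(2) unfolding has_right_angle_def .
  ultimately show ?thesis
    using pos unfolding admissible_sides_def angles a_def[symmetric] b_def[symmetric] c_def[symmetric]
    by (auto simp: add.commute)
qed

definition approx_sides :: "real \<Rightarrow> real \<Rightarrow> real \<Rightarrow> real \<Rightarrow> 'a::metric_space \<Rightarrow> 'a \<Rightarrow> 'a \<Rightarrow> bool" where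
  "approx_sides a b c \<delta> x y z \<longleftrightarrow> (\<exists>\<alpha> \<beta> \<gamma>. perm3 a b c \<alpha> \<beta> \<gamma> \<and>
     \<bar>dist x y - \<alpha>\<bar> \<le> \<delta> \<and> \<bar>dist x z - \<beta>\<bar> \<le> \<delta> \<and> \<bar>dist y z - \<gamma>\<bar> \<le> \<delta>)"

lemma approx_sides_swap12: "approx_sides a b c \<delta> x y z \<Longrightarrow> approx_sides a b c \<delta> y x z"
  and approx_sides_swap23: "approx_sides a b c \<delta> x y z \<Longrightarrow> approx_sides a b c \<delta> x z y"
  unfolding approx_sides_def by (metis dist_commute perm3_swap12 perm3_swap23)+

lemma approx_sides_perm3:
  "perm3 x y z x' y' z' \<Longrightarrow> approx_sides a b c \<delta> x' y' z' \<Longrightarrow> approx_sides a b c \<delta> x y z"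
  unfolding perm3_def by (auto dest: approx_sides_swap12 approx_sides_swap23)

lemma tri_edges_approx_sides:
  assumes "{x, y, z} \<in> tri_edges t1 t2 t3 P \<epsilon>" "distinct [x, y, z]"
  shows "approx_sides (dist t1 t2) (dist t2 t3) (dist t1 t3)
           (2 * \<epsilon> * Min {dist t1 t2, dist t2 t3, dist t1 t3}) x y z"
proof -
  define \<eta> where "\<eta> = \<epsilon> * Min {dist t1 t2, dist t2 t3, dist t1 t3}"
  obtain a' b' c' where relabel: "{x, y, z} = {a', b', c'}"
    and "eps_congruent_ord t1 t2 t3 \<epsilon> a' b' c'"
    using assms(1) unfolding tri_edges_def by blast
  from this(2) obtain a b c where "dist a b = dist t1 t2" "dist b c = dist t2 t3" "dist a c = dist t1 t3"
    "dist a' a \<le> \<eta>" "dist b' b \<le> \<eta>" "dist c' c \<le> \<eta>"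
    unfolding eps_congruent_ord_def Let_def \<eta>_def by blast
  then have "\<bar>dist a' b' - dist t1 t2\<bar> \<le> 2 * \<eta>" "\<bar>dist a' c' - dist t1 t3\<bar> \<le> 2 * \<eta>"
    "\<bar>dist b' c' - dist t2 t3\<bar> \<le> 2 * \<eta>"
    using abs_dist_diff_dist_le[of a' b' a b] abs_dist_diff_dist_le[of a' c' a c]
      abs_dist_diff_dist_le[of b' c' b c] by (simp_all add: dist_commute)
  then have "approx_sides (dist t1 t2) (dist t2 t3) (dist t1 t3) (2 * \<eta>) a' b' c'"
    unfolding approx_sides_def perm3_def by blast
  then have "approx_sides (dist t1 t2) (dist t2 t3) (dist t1 t3) (2 * \<eta>) x y z"
    by (rule approx_sides_perm3[OF perm3_of_insert_eq[OF assms(2) relabel[symmetric]]])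
  then show ?thesis unfolding \<eta>_def by (simp add: mult.assoc)
qed

definition approx_K43minus :: "real \<Rightarrow> real \<Rightarrow> real \<Rightarrow> real \<Rightarrow> 'a::metric_space \<Rightarrow> 'a \<Rightarrow> 'a \<Rightarrow> 'a \<Rightarrow> bool" where
  "approx_K43minus a b c \<delta> x y1 y2 y3 \<longleftrightarrow>
     approx_sides a b c \<delta> x y1 y2 \<and> approx_sides a b c \<delta> x y1 y3 \<and> approx_sides a b c \<delta> x y2 y3"

lemma contains_copy_K43minus_approx:
  assumes "contains_copy P (tri_edges t1 t2 t3 P \<epsilon>) K43minus_V K43minus_E"
  obtains x y1 y2 y3 :: pt where "approx_K43minus (dist t1 t2) (dist t2 t3) (dist t1 t3)
    (2 * \<epsilon> * Min {dist t1 t2, dist t2 t3, dist t1 t3}) x y1 y2 y3"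
proof -
  obtain f where "inj_on f K43minus_V" "\<forall>e\<in>K43minus_E. f ` e \<in> tri_edges t1 t2 t3 P \<epsilon>"
    using assms unfolding contains_copy_def by blast
  then have "distinct [f 1, f 2, f 3, f 4]" and edges: "{f 1, f 2, f 3} \<in> tri_edges t1 t2 t3 P \<epsilon>"
    "{f 1, f 2, f 4} \<in> tri_edges t1 t2 t3 P \<epsilon>" "{f 1, f 3, f 4} \<in> tri_edges t1 t2 t3 P \<epsilon>"
    unfolding K43minus_V_def K43minus_E_def inj_on_def by auto
  then have "approx_K43minus (dist t1 t2) (dist t2 t3) (dist t1 t3)
    (2 * \<epsilon> * Min {dist t1 t2, dist t2 t3, dist t1 t3}) (f 1) (f 2) (f 3) (f 4)"
    using tri_edges_approx_sides[OF edges(1)] tri_edges_approx_sides[OF edges(2)]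
      tri_edges_approx_sides[OF edges(3)] unfolding approx_K43minus_def by simp
  then show ?thesis by (rule that)
qed

(* Coordinates are ordered as (|x y1|, |x y2|, |x y3|, |y1 y2|, |y1 y3|, |y2 y3|). *)
definition exact_configs :: "real \<Rightarrow> real \<Rightarrow> real \<Rightarrow> (real \<times> real \<times> real \<times> real \<times> real \<times> real) set" where
  "exact_configs a b c = {(p1, p2, p3, q12, q13, q23).
     perm3 a b c p1 p2 q12 \<and> perm3 a b c p1 p3 q13 \<and> perm3 a b c p2 p3 q23}"

definition gram_det_dists :: "real \<times> real \<times> real \<times> real \<times> real \<times> real \<Rightarrow> real" where
  "gram_det_dists = (\<lambda>(p1, p2, p3, q12, q13, q23). gram_det (p1^2) (p2^2) (p3^2) (q12^2) (q13^2) (q23^2))"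

lemma finite_exact_configs: "finite (exact_configs a b c)"
proof -
  define V where "V = {a, b, c}"
  have "s \<in> V \<times> V \<times> V \<times> V \<times> V \<times> V" if exact: "s \<in> exact_configs a b c" for s
  proof -
    obtain p1 p2 p3 q12 q13 q23 where s: "s = (p1, p2, p3, q12, q13, q23)"
      and "perm3 a b c p1 p2 q12" "perm3 a b c p1 p3 q13" "perm3 a b c p2 p3 q23"
      using exact unfolding exact_configs_def by (cases s) auto
    then have "p1 \<in> V \<and> p2 \<in> V \<and> p3 \<in> V \<and> q12 \<in> V \<and> q13 \<in> V \<and> q23 \<in> V"
      unfolding V_def by (meson perm3_mem)
    then show ?thesis unfolding s by simp
  qed
  moreover have "finite (V \<times> V \<times> V \<times> V \<times> V \<times> V)"
    unfolding V_def by (intro finite_cartesian_product) simp_all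
  ultimately show ?thesis by (meson finite_subset subsetI)
qed

lemma continuous_on_gram_det_dists: "continuous_on UNIV gram_det_dists"
  unfolding gram_det_dists_def gram_det_def case_prod_unfold by (intro continuous_intros) auto

lemma exact_configs_separated_from_zeros:
  assumes "admissible_sides a b c"
  obtains d where "d > 0" "\<And>s r. s \<in> exact_configs a b c \<Longrightarrow> gram_det_dists r = 0 \<Longrightarrow> d \<le> dist s r"
proof -
  have "closed {r. gram_det_dists r = 0}"
    by (rule closed_Collect_eq[OF continuous_on_gram_det_dists continuous_on_const])
  moreover have "exact_configs a b c \<inter> {r. gram_det_dists r = 0} = {}"
    using gram_det_perm3_nonzero[OF assms] unfolding exact_configs_def gram_det_dists_def by auto
  ultimately obtain d where "d > 0"
    "\<forall>s\<in>exact_configs a b c. \<forall>r\<in>{r. gram_det_dists r = 0}. d \<le> dist s r"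
    using separate_compact_closed[OF finite_imp_compact[OF finite_exact_configs]] by blast
  then show ?thesis using that by blast
qed

lemma approx_K43minus_near_exact_config:
  fixes x y1 y2 y3 :: "'a::metric_space"
  assumes sep: "\<And>v w. v \<in> {a, b, c} \<Longrightarrow> w \<in> {a, b, c} \<Longrightarrow> v \<noteq> w \<Longrightarrow> 2 * \<delta> < dist v w"
    and "approx_K43minus a b c \<delta> x y1 y2 y3"
  obtains s where "s \<in> exact_configs a b c"
    "dist (dist x y1, dist x y2, dist x y3, dist y1 y2, dist y1 y3, dist y2 y3) s \<le> 6 * \<delta>"
proof -
  have snap: "v = w" if "v \<in> {a, b, c}" "w \<in> {a, b, c}" "\<bar>r - v\<bar> \<le> \<delta>" "\<bar>r - w\<bar> \<le> \<delta>" for r v w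
    using sep[OF that(1,2)] that(3,4) by (force simp: dist_real_def)
  obtain \<alpha>1 \<beta>1 \<gamma>1 \<alpha>2 \<beta>2 \<gamma>2 \<alpha>3 \<beta>3 \<gamma>3 where
    e1: "perm3 a b c \<alpha>1 \<beta>1 \<gamma>1" "\<bar>dist x y1 - \<alpha>1\<bar> \<le> \<delta>" "\<bar>dist x y2 - \<beta>1\<bar> \<le> \<delta>" "\<bar>dist y1 y2 - \<gamma>1\<bar> \<le> \<delta>"
    and e2: "perm3 a b c \<alpha>2 \<beta>2 \<gamma>2" "\<bar>dist x y1 - \<alpha>2\<bar> \<le> \<delta>" "\<bar>dist x y3 - \<beta>2\<bar> \<le> \<delta>" "\<bar>dist y1 y3 - \<gamma>2\<bar> \<le> \<delta>"
    and e3: "perm3 a b c \<alpha>3 \<beta>3 \<gamma>3" "\<bar>dist x y2 - \<alpha>3\<bar> \<le> \<delta>" "\<bar>dist x y3 - \<beta>3\<bar> \<le> \<delta>" "\<bar>dist y2 y3 - \<gamma>3\<bar> \<le> \<delta>"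
    using assms(2) unfolding approx_K43minus_def approx_sides_def by metis
  have "\<alpha>2 = \<alpha>1" "\<alpha>3 = \<beta>1" "\<beta>3 = \<beta>2"
    using snap e1 e2 e3 perm3_mem[OF e1(1)] perm3_mem[OF e2(1)] perm3_mem[OF e3(1)] by metis+
  then have exact: "(\<alpha>1, \<beta>1, \<beta>2, \<gamma>1, \<gamma>2, \<gamma>3) \<in> exact_configs a b c"
    using e1(1) e2(1) e3(1) unfolding exact_configs_def by simp
  have "dist (dist x y1, dist x y2, dist x y3, dist y1 y2, dist y1 y3, dist y2 y3)
      (\<alpha>1, \<beta>1, \<beta>2, \<gamma>1, \<gamma>2, \<gamma>3) \<le> dist (dist x y1) \<alpha>1 + (dist (dist x y2) \<beta>1 +
        (dist (dist x y3) \<beta>2 + (dist (dist y1 y2) \<gamma>1 + (dist (dist y1 y3) \<gamma>2 + dist (dist y2 y3) \<gamma>3))))"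
    by (intro order_trans[OF dist_Pair_le] add_left_mono order_refl)
  also have "\<dots> \<le> 6 * \<delta>"
    using e1(2-4) e2(3,4) e3(4) unfolding dist_real_def by linarith
  finally show ?thesis using that exact by blast
qed

lemma no_planar_approx_K43minus:
  assumes "admissible_sides a b c"
  obtains \<delta> where "\<delta> > 0" "\<And>x y1 y2 y3 :: real^2. \<not> approx_K43minus a b c \<delta> x y1 y2 y3"
proof -
  obtain d where "d > 0"
    and far: "\<And>s r. s \<in> exact_configs a b c \<Longrightarrow> gram_det_dists r = 0 \<Longrightarrow> d \<le> dist s r"
    using exact_configs_separated_from_zeros[OF assms] by blast
  obtain g where "g > 0" and sep: "\<And>v w. v \<in> {a, b, c} \<Longrightarrow> w \<in> {a, b, c} \<Longrightarrow> v \<noteq> w \<Longrightarrow> g \<le> dist v w"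
    using finite_set_separated[of "{a, b, c}"] by auto
  define \<delta> where "\<delta> = min (d / 7) (g / 3)"
  have "\<delta> > 0" using \<open>d > 0\<close> \<open>g > 0\<close> unfolding \<delta>_def by simp
  moreover have False if approx: "approx_K43minus a b c \<delta> x y1 y2 y3" for x y1 y2 y3 :: "real^2"
  proof -
    let ?r = "(dist x y1, dist x y2, dist x y3, dist y1 y2, dist y1 y3, dist y2 y3)"
    have sep\<delta>: "2 * \<delta> < dist v w" if "v \<in> {a, b, c}" "w \<in> {a, b, c}" "v \<noteq> w" for v w
      using sep[OF that] \<open>g > 0\<close> unfolding \<delta>_def by linarith
    obtain s where "s \<in> exact_configs a b c" and near: "dist ?r s \<le> 6 * \<delta>"
      by (rule approx_K43minus_near_exact_config[OF sep\<delta> approx])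
    moreover have "gram_det_dists ?r = 0"
      unfolding gram_det_dists_def using gram_det_plane by simp
    ultimately have "d \<le> dist ?r s" by (metis far dist_commute)
    with near \<open>d > 0\<close> show False unfolding \<delta>_def by linarith
  qed
  ultimately show ?thesis using that by blast
qed

theorem lemma2p9:
  fixes t1 t2 t3 :: pt
  assumes "is_triangle t1 t2 t3"
    and "\<not> has_right_angle t1 t2 t3"
    and "\<not> type_120_30_30 t1 t2 t3"
  shows "forbidden K43minus_V K43minus_E t1 t2 t3"
proof -
  define M where "M = Min {dist t1 t2, dist t2 t3, dist t1 t3}"
  have adm: "admissible_sides (dist t1 t2) (dist t2 t3) (dist t1 t3)"
    using triangle_admissible_sides[OF assms] .
  then have "M > 0" unfolding M_def admissible_sides_def by simp
  obtain \<delta> where "\<delta> > 0"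
    and no_approx: "\<And>x y1 y2 y3 :: pt. \<not> approx_K43minus (dist t1 t2) (dist t2 t3) (dist t1 t3) \<delta> x y1 y2 y3"
    using no_planar_approx_K43minus[OF adm] by blast
  define \<epsilon> where "\<epsilon> = \<delta> / (2 * M)"
  have "\<epsilon> > 0" and "2 * \<epsilon> * M = \<delta>"
    using \<open>\<delta> > 0\<close> \<open>M > 0\<close> unfolding \<epsilon>_def by simp_all
  have "\<not> contains_copy P (tri_edges t1 t2 t3 P \<epsilon>) K43minus_V K43minus_E" for P
  proof
    assume "contains_copy P (tri_edges t1 t2 t3 P \<epsilon>) K43minus_V K43minus_E"
    then obtain x y1 y2 y3 :: pt where
      "approx_K43minus (dist t1 t2) (dist t2 t3) (dist t1 t3) (2 * \<epsilon> * M) x y1 y2 y3"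
      unfolding M_def by (rule contains_copy_K43minus_approx)
    with no_approx \<open>2 * \<epsilon> * M = \<delta>\<close> show False by simp
  qed
  then show ?thesis unfolding forbidden_def using \<open>\<epsilon> > 0\<close> by blast
qed

end
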